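(* Let $X^{2n}$ be a quasitoric manifold over a simple polytope $P^n$, $T^{n-1}\subset T^n$ a subtorus, and $1\leqslant j\leqslant n-1$. The restricted action of $T^{n-1}$ on $X^{2n}$ is in $j$-general position if and only if $\dim K_{\mathrm{spec}}\leqslant n-2-j$.
   Context: For each facet $F$ of $P^n$, $\lambda(F)\in N=\mathrm{Hom}(T^1,T^n)\cong\mathbb{Z}^n$ is the primitive vector of the circle subgroup stabilizing points over the interior of $F$. $\Pi\subset N$ is the image of $\mathrm{Hom}(T^1,T^{n-1})$. A facet $F$ is special if $\lambda(F)\in\Pi$. $K_{\mathrm{spec}}$ is the simplicial complex whose vertices are the special facets, a set of special facets being a simplex iff they have nonempty common intersection in $P^n$. An action of $T^{n-1}$ on $X^{2n}$ is in $j$-general position if it is effective, has nonempty finite fixed point set, and at each fixed point every $j$ of the $n$ tangent weights in $\mathrm{Hom}(T^{n-1},T^1)$ are linearly independent over $\mathbb{Q}$. *)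

theory Defs
  imports "HOL-Analysis.Analysis"
begin

text \<open>Combinatorial model of a quasitoric manifold (Davis--Januszkiewicz):
  a simple n-polytope P in R^n together with its characteristic function
  lam : facets -> Z^n = N.  The lattice Z^n is int^'n, n = CARD('n).\<close>

definition facets_at :: "(real^'n) set \<Rightarrow> real^'n \<Rightarrow> (real^'n) set set" where
  "facets_at P v = {F. F facet_of P \<and> v \<in> F}"

definition simple_polytope :: "(real^'n) set \<Rightarrow> bool" where
  "simple_polytope P \<longleftrightarrow> polytope P \<and> aff_dim P = int CARD('n) \<and>
     (\<forall>v. v extreme_point_of P \<longrightarrow> card (facets_at P v) = CARD('n))"

definition int_basis :: "(real^'n) set set \<Rightarrow> ((real^'n) set \<Rightarrow> int^'n) \<Rightarrow> bool" where
  "int_basis A lam \<longleftrightarrow> (\<forall>x::int^'n. \<exists>!c::(real^'n) set \<Rightarrow> int.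
      (\<forall>F. F \<notin> A \<longrightarrow> c F = 0) \<and> x = (\<Sum>F\<in>A. c F *s lam F))"

definition quasitoric_pair :: "(real^'n) set \<Rightarrow> ((real^'n) set \<Rightarrow> int^'n) \<Rightarrow> bool" where
  "quasitoric_pair P lam \<longleftrightarrow> simple_polytope P \<and>
     (\<forall>v. v extreme_point_of P \<longrightarrow> int_basis (facets_at P v) lam)"

text \<open>L = image of Hom(T^1,T^{n-1}) in N for a subtorus T^{n-1} of T^n:
  a saturated subgroup of Z^n of rank n-1.\<close>
definition subtorus_lattice :: "(int^'n) set \<Rightarrow> bool" where
  "subtorus_lattice L \<longleftrightarrow> 0 \<in> L \<and> (\<forall>x\<in>L. \<forall>y\<in>L. x + y \<in> L \<and> - x \<in> L) \<and>
     (\<forall>k::int. \<forall>x. k \<noteq> 0 \<longrightarrow> k *s x \<in> L \<longrightarrow> x \<in> L) \<and>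
     dim ((\<lambda>x. (\<chi> i. real_of_int (x $ i)) :: real^'n) ` L) = CARD('n) - 1"

text \<open>Pairing Hom(T^n,T^1) x Hom(T^1,T^n) -> Z.\<close>
definition idot :: "int^'n \<Rightarrow> int^'n \<Rightarrow> int" where
  "idot a x = (\<Sum>i\<in>UNIV. a $ i * x $ i)"

text \<open>Tangent weight of T^n at the fixed point over vertex v corresponding to the
  facet F containing v: the dual basis to {lam G : G in facets_at P v}.\<close>
definition weight :: "(real^'n) set \<Rightarrow> ((real^'n) set \<Rightarrow> int^'n) \<Rightarrow> real^'n \<Rightarrow> (real^'n) set \<Rightarrow> int^'n" where
  "weight P lam v F = (THE a. \<forall>G\<in>facets_at P v. idot a (lam G) = (if G = F then 1 else 0))"

text \<open>Z-span of lam over the facets containing a face G: lattice of the stabilizer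
  torus of points over the relative interior of G.\<close>
definition stab_lattice :: "(real^'n) set \<Rightarrow> ((real^'n) set \<Rightarrow> int^'n) \<Rightarrow> (real^'n) set \<Rightarrow> (int^'n) set" where
  "stab_lattice P lam G = {x. \<exists>c::(real^'n) set \<Rightarrow> int.
      x = (\<Sum>F\<in>{F. F facet_of P \<and> G \<subseteq> F}. c F *s lam F)}"

text \<open>Faces over which the points are fixed by the subtorus with lattice L.\<close>
definition fixed_faces :: "(real^'n) set \<Rightarrow> ((real^'n) set \<Rightarrow> int^'n) \<Rightarrow> (int^'n) set \<Rightarrow> (real^'n) set set" where
  "fixed_faces P lam L = {G. G face_of P \<and> G \<noteq> {} \<and> L \<subseteq> stab_lattice P lam G}"

definition restricted_weights_indep ::
  "(real^'n) set \<Rightarrow> ((real^'n) set \<Rightarrow> int^'n) \<Rightarrow> (int^'n) set \<Rightarrow> real^'n \<Rightarrow> (real^'n) set set \<Rightarrow> bool" where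
  "restricted_weights_indep P lam L v S \<longleftrightarrow> (\<forall>c::(real^'n) set \<Rightarrow> rat.
      (\<forall>x\<in>L. (\<Sum>F\<in>S. c F * of_int (idot (weight P lam v F) x)) = 0) \<longrightarrow> (\<forall>F\<in>S. c F = 0))"

text \<open>j-general position of the restricted action (effectiveness is automatic for a
  subtorus of the effectively acting T^n).  Fixed point set nonempty and finite:
  some face is fixed, and every fixed face is a vertex.\<close>
definition j_general_position ::
  "(real^'n) set \<Rightarrow> ((real^'n) set \<Rightarrow> int^'n) \<Rightarrow> (int^'n) set \<Rightarrow> nat \<Rightarrow> bool" where
  "j_general_position P lam L j \<longleftrightarrow>
     fixed_faces P lam L \<noteq> {} \<and> (\<forall>G\<in>fixed_faces P lam L. \<exists>v. G = {v}) \<and>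
     (\<forall>v. v extreme_point_of P \<longrightarrow> (\<forall>S. S \<subseteq> facets_at P v \<and> card S = j \<longrightarrow>
        restricted_weights_indep P lam L v S))"

definition special_facets :: "(real^'n) set \<Rightarrow> ((real^'n) set \<Rightarrow> int^'n) \<Rightarrow> (int^'n) set \<Rightarrow> (real^'n) set set" where
  "special_facets P lam L = {F. F facet_of P \<and> lam F \<in> L}"

definition Kspec_simplices :: "(real^'n) set \<Rightarrow> ((real^'n) set \<Rightarrow> int^'n) \<Rightarrow> (int^'n) set \<Rightarrow> (real^'n) set set set" where
  "Kspec_simplices P lam L = {\<sigma>. \<sigma> \<noteq> {} \<and> \<sigma> \<subseteq> special_facets P lam L \<and> \<Inter>\<sigma> \<noteq> {}}"

definition Kspec_dim :: "(real^'n) set \<Rightarrow> ((real^'n) set \<Rightarrow> int^'n) \<Rightarrow> (int^'n) set \<Rightarrow> int" where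
  "Kspec_dim P lam L = (if Kspec_simplices P lam L = {} then -1
      else int (Max (card ` Kspec_simplices P lam L)) - 1)"

end

theory Submission
  imports Defs
begin

text \<open>
  A saturated sublattice \<open>L\<close> of rank \<open>n - 1\<close> is the kernel of a covector \<open>m \<noteq> 0\<close>: lift a
  real basis of its span to \<open>L\<close>, take \<open>m\<close> to be the cofactor vector of the lifted basis,
  and use Cramer's rule over \<open>\<int>\<close> plus saturation to see that \<open>ker m \<subseteq> L\<close>.

  At a vertex \<open>v\<close> the tangent weights \<open>w\<^sub>F\<close> form the basis dual to the characteristic
  vectors \<open>\<lambda>(F)\<close>, \<open>F \<ni> v\<close>, so \<open>m = \<Sum>\<^sub>F m(\<lambda> F) w\<^sub>F\<close>. Restricted to \<open>L = ker m\<close>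
  this is, up to scaling, the only linear relation among the weights, and its support is the set
  of non-special facets at \<open>v\<close>. Hence \<open>j\<close> weights at \<open>v\<close> are independent iff they miss a
  non-special facet, and all \<open>j\<close>-subsets are independent iff at most \<open>n - 1 - j\<close> facets at
  \<open>v\<close> are special. Such a bound also makes the fixed point set finite: a fixed face through
  \<open>v\<close> other than \<open>{v}\<close> forces all but one facet at \<open>v\<close> to be special. Finally, the simplices
  of \<open>K\<^sub>s\<^sub>p\<^sub>e\<^sub>c\<close> are the nonempty sets of special facets through a common vertex, so the
  bound at every vertex says exactly \<open>dim K\<^sub>s\<^sub>p\<^sub>e\<^sub>c \<le> n - 2 - j\<close>.
\<close>

section \<open>Integer vectors and determinants\<close>

lemma idot_diff: "idot a (x - y) = idot a x - idot a y"
  by (simp add: idot_def right_diff_distrib sum_subtractf)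

lemma idot_smult: "idot a (k *s x) = k * idot a x"
  by (simp add: idot_def sum_distrib_left algebra_simps)

lemma idot_sum: "idot a (sum f I) = (\<Sum>i\<in>I. idot a (f i))"
  by (simp add: idot_def sum_component sum_distrib_left sum.swap[of _ UNIV I])

lemma idot_lincomb: "idot a (\<Sum>F\<in>A. c F *s u F) = (\<Sum>F\<in>A. c F * idot a (u F))"
  by (simp add: idot_sum idot_smult)

lemma idot_axis: "idot a (axis k 1) = a $ k"
  by (simp add: idot_def axis_def if_distrib[of "(*) _"] cong: if_cong)

lemma sum_smult_swap:
  fixes u :: "'b \<Rightarrow> 'a::comm_ring_1^'n"
  shows "(\<Sum>F\<in>A. (\<Sum>i\<in>I. g i * c i F) *s u F) = (\<Sum>i\<in>I. g i *s (\<Sum>F\<in>A. c i F *s u F))"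
proof -
  have "(\<Sum>F\<in>A. \<Sum>i\<in>I. g i * c i F * u F $ k) = (\<Sum>i\<in>I. \<Sum>F\<in>A. g i * c i F * u F $ k)" for k
    by (rule sum.swap)
  then show ?thesis
    by (simp add: vec_eq_iff sum_component sum_distrib_left sum_distrib_right mult.assoc)
qed

lemma card_Compl_singleton: "card (- {k :: 'a::finite}) = CARD('a) - 1"
  by (metis Compl_eq_Diff_UNIV card_Diff_singleton finite iso_tuple_UNIV_I)

definition real_vec :: "int^'n \<Rightarrow> real^'n" where
  "real_vec x = (\<chi> i. real_of_int (x $ i))"

lemma real_vec_axis [simp]: "real_vec (axis i 1) = axis i 1"
  by (simp add: real_vec_def axis_def vec_eq_iff)

lemma det_map_matrix_of_int: "det (map_matrix real_of_int A) = real_of_int (det A)"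
  by (simp add: det_def of_int_sum of_int_prod)

lemma det_smult_eq_sum_replace_row:
  fixes A :: "'a::field^'n^'n"
  assumes "det A \<noteq> 0"
  shows "det A *s y = (\<Sum>q\<in>UNIV. det (\<chi> i. if i = q then y else row i A) *s row q A)"
proof -
  obtain x where "transpose A *v x = y"
    using cramer[of "transpose A"] assms by (auto simp: det_transpose)
  then have y: "y = (\<Sum>i\<in>UNIV. x $ i *s row i A)"
    by (simp add: matrix_mult_sum column_transpose)
  have "det (\<chi> i. if i = q then y else row i A) = x $ q * det A" for q
    unfolding y by (rule cramer_lemma_transpose)
  then show ?thesis
    by (simp add: y scalar_mult_eq_scaleR sum_cmul[symmetric] vector_smult_assoc mult.commute)
qed

lemma int_det_smult_eq_sum_replace_row:
  fixes A :: "int^'n^'n"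
  assumes "det A \<noteq> 0"
  shows "det A *s y = (\<Sum>q\<in>UNIV. det (\<chi> i. if i = q then y else row i A) *s row q A)"
proof -
  let ?R = "map_matrix real_of_int"
  have replace: "(\<chi> i. if i = q then real_vec y else row i (?R A)) =
      ?R (\<chi> i. if i = q then y else row i A)" for q
    by (auto simp: vec_eq_iff real_vec_def row_def)
  have "det (?R A) *s real_vec y =
      (\<Sum>q\<in>UNIV. det (\<chi> i. if i = q then real_vec y else row i (?R A)) *s row q (?R A))"
    using assms by (intro det_smult_eq_sum_replace_row) (simp add: det_map_matrix_of_int)
  then have "real_of_int ((det A *s y) $ c) =
      real_of_int ((\<Sum>q\<in>UNIV. det (\<chi> i. if i = q then y else row i A) *s row q A) $ c)" for c
    by (simp add: vec_eq_iff replace det_map_matrix_of_int sum_component real_vec_def row_def)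
  then show ?thesis unfolding of_int_eq_iff by (rule vec_eq_iff[THEN iffD2, OF allI])
qed

lemma det_replace_row_eq_idot:
  fixes R :: "'n \<Rightarrow> int^'n"
  shows "det (\<chi> i. if i = k then x else R i) =
    idot (\<chi> j. det (\<chi> i. if i = k then axis j 1 else R i)) x"
proof -
  have "det (\<chi> i. if i = k then x else R i) =
      det (\<chi> i. if i = k then \<Sum>j\<in>UNIV. x $ j *s axis j 1 else R i)"
    by (simp only: basis_expansion)
  also have "\<dots> = (\<Sum>j\<in>UNIV. det (\<chi> i. if i = k then x $ j *s axis j 1 else R i))"
    by (rule det_linear_row_sum) simp
  also have "\<dots> = (\<Sum>j\<in>UNIV. x $ j * det (\<chi> i. if i = k then axis j 1 else R i))"
    by (simp only: det_row_mul)
  finally show ?thesis by (simp add: idot_def mult.commute)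
qed

lemma det_replace_row_eq_0_iff:
  fixes R :: "'n \<Rightarrow> real^'n"
  assumes inj: "inj_on R (- {k})" and indep: "independent (R ` (- {k}))"
  shows "det (\<chi> i. if i = k then y else R i) = 0 \<longleftrightarrow> y \<in> span (R ` (- {k}))"
proof -
  let ?B = "R ` (- {k})"
  have "rows (\<chi> i. if i = k then y else R i) = insert y ?B"
    by (auto simp: rows_def row_def)
  then have det_iff: "det (\<chi> i. if i = k then y else R i) = 0 \<longleftrightarrow> dim (insert y ?B) < CARD('n)"
    by (simp add: det_eq_0_rank row_rank_def)
  have card_B: "card ?B = CARD('n) - 1"
    using inj by (simp add: card_image card_Compl_singleton)
  show ?thesis
  proof (cases "y \<in> span ?B")
    case True
    then have "dim (insert y ?B) = card ?B"
      using indep by (simp add: dim_insert dim_eq_card_independent)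
    then show ?thesis using True det_iff card_B by simp
  next
    case False
    then have "y \<notin> ?B" by (metis span_base)
    then have card_insert: "card (insert y ?B) = CARD('n)"
      using card_B independent_imp_finite[OF indep] by simp
    have "independent (insert y ?B)"
      using False indep by (simp add: independent_insert)
    then have "dim (insert y ?B) = CARD('n)"
      unfolding card_insert[symmetric] by (rule dim_eq_card_independent)
    then show ?thesis using False det_iff by simp
  qed
qed

lemma exists_axis_notin_span:
  fixes B :: "(real^'n) set"
  assumes "dim B < CARD('n)"
  obtains i where "axis i 1 \<notin> span B"
proof (rule ccontr)
  assume "\<not> thesis"
  with that have "axis i 1 \<in> span B" for i by blast
  then have "x \<in> span B" for x :: "real^'n"
    by (subst basis_expansion[symmetric]) (simp add: span_sum span_scale scalar_mult_eq_scaleR)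
  then have "span B = UNIV" by auto
  then show False using assms dim_span[of B] by simp
qed

section \<open>Saturated sublattices of corank one\<close>

lemma subtorus_lattice_smult:
  assumes L: "subtorus_lattice L" and x: "x \<in> L"
  shows "k *s x \<in> L"
proof -
  have nat: "int m *s x \<in> L" for m
  proof (induction m)
    case 0
    then show ?case using L by (simp add: subtorus_lattice_def vector_smult_lzero)
  next
    case (Suc m)
    have "int (Suc m) *s x = int m *s x + x" by (simp add: vec_eq_iff algebra_simps)
    then show ?case using Suc x L by (simp add: subtorus_lattice_def)
  qed
  show ?thesis
  proof (cases "k \<ge> 0")
    case True
    then show ?thesis using nat[of "nat k"] by simp
  next
    case False
    then have "k *s x = - (int (nat (- k)) *s x)" by (simp add: vec_eq_iff)
    then show ?thesis using nat[of "nat (- k)"] L by (simp add: subtorus_lattice_def)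
  qed
qed

lemma subtorus_lattice_sum:
  assumes L: "subtorus_lattice L" and f: "\<And>i. i \<in> I \<Longrightarrow> f i \<in> L"
  shows "sum f I \<in> L"
proof (cases "finite I")
  case True
  then show ?thesis using f
    by (induction I rule: finite_induct) (use L in \<open>simp_all add: subtorus_lattice_def\<close>)
next
  case False
  then show ?thesis using L by (simp add: subtorus_lattice_def)
qed

lemma real_vec_basis_lift:
  fixes L :: "(int^'n) set" and K :: "'i set"
  assumes "dim (real_vec ` L) = card K" and "finite K"
  obtains l :: "'i \<Rightarrow> int^'n" where "l ` K \<subseteq> L" "inj_on (real_vec \<circ> l) K"
    "independent ((real_vec \<circ> l) ` K)" "real_vec ` L \<subseteq> span ((real_vec \<circ> l) ` K)"
proof -
  obtain B where B: "B \<subseteq> real_vec ` L" "independent B" "real_vec ` L \<subseteq> span B"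
      "card B = dim (real_vec ` L)"
    by (rule basis_exists)
  have "card K = card B" using B(4) assms(1) by simp
  then obtain \<beta> where \<beta>: "bij_betw \<beta> K B"
    using finite_same_card_bij[OF assms(2) independent_imp_finite[OF B(2)]] by blast
  define l where "l i = inv_into L real_vec (\<beta> i)" for i
  have "\<beta> i \<in> real_vec ` L" if "i \<in> K" for i
    using \<beta> B(1) that by (auto simp: bij_betw_def)
  then have "l i \<in> L" "real_vec (l i) = \<beta> i" if "i \<in> K" for i
    using that by (simp_all add: l_def inv_into_into f_inv_into_f)
  then have "l ` K \<subseteq> L" and "(real_vec \<circ> l) ` K = B" and "inj_on (real_vec \<circ> l) K"
    using \<beta> by (auto simp: bij_betw_def inj_on_def cong: image_cong)
  then show ?thesis using that B(2,3) by simp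
qed

lemma subtorus_lattice_mem_if_det_replace_row_eq_0:
  assumes L: "subtorus_lattice L" and l: "l ` (- {k}) \<subseteq> L"
    and e: "det (\<chi> i. if i = k then e else l i) \<noteq> 0"
    and x: "det (\<chi> i. if i = k then x else l i) = 0"
  shows "x \<in> L"
proof -
  let ?Z = "\<chi> i. if i = k then e else l i"
  have "det ?Z *s x = (\<Sum>q\<in>UNIV. det (\<chi> i. if i = q then x else row i ?Z) *s row q ?Z)"
    by (rule int_det_smult_eq_sum_replace_row[OF e])
  also have "\<dots> \<in> L"
  proof (rule subtorus_lattice_sum[OF L])
    fix q
    show "det (\<chi> i. if i = q then x else row i ?Z) *s row q ?Z \<in> L"
    proof (cases "q = k")
      case True
      then have "(\<chi> i. if i = q then x else row i ?Z) = (\<chi> i. if i = k then x else l i)"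
        by (simp add: vec_eq_iff row_def)
      then show ?thesis using x L by (simp add: vector_smult_lzero subtorus_lattice_def)
    next
      case False
      then show ?thesis using l by (intro subtorus_lattice_smult[OF L]) (auto simp: row_def)
    qed
  qed
  finally show ?thesis using e L by (simp add: subtorus_lattice_def)
qed

lemma subtorus_lattice_eq_kernel:
  assumes L: "subtorus_lattice L"
  obtains m :: "int^'n" where "m \<noteq> 0" "L = {x. idot m x = 0}"
proof -
  fix k :: 'n
  have "dim (real_vec ` L) = card (- {k})"
    using L by (simp add: subtorus_lattice_def real_vec_def card_Compl_singleton)
  then obtain l where l: "l ` (- {k}) \<subseteq> L" "inj_on (real_vec \<circ> l) (- {k})"
      "independent ((real_vec \<circ> l) ` (- {k}))" "real_vec ` L \<subseteq> span ((real_vec \<circ> l) ` (- {k}))"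
    by (rule real_vec_basis_lift) simp
  define Z where "Z x = (\<chi> i. if i = k then x else l i)" for x
  define m where "m = (\<chi> j. det (Z (axis j 1)))"
  have idot_m: "idot m x = det (Z x)" for x
    unfolding m_def Z_def by (rule det_replace_row_eq_idot[symmetric])
  have m_iff: "idot m x = 0 \<longleftrightarrow> real_vec x \<in> span ((real_vec \<circ> l) ` (- {k}))" for x
  proof -
    have "map_matrix real_of_int (Z x) = (\<chi> i. if i = k then real_vec x else (real_vec \<circ> l) i)"
      by (simp add: vec_eq_iff Z_def real_vec_def)
    then have "real_of_int (idot m x) = det (\<chi> i. if i = k then real_vec x else (real_vec \<circ> l) i)"
      by (metis idot_m det_map_matrix_of_int)
    then have "idot m x = 0 \<longleftrightarrow> det (\<chi> i. if i = k then real_vec x else (real_vec \<circ> l) i) = 0"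
      by (metis of_int_eq_0_iff)
    also have "\<dots> \<longleftrightarrow> real_vec x \<in> span ((real_vec \<circ> l) ` (- {k}))"
      by (rule det_replace_row_eq_0_iff[OF l(2,3)])
    finally show ?thesis .
  qed
  have "dim ((real_vec \<circ> l) ` (- {k})) < CARD('n)"
    using l(3) card_image[OF l(2)] by (simp add: dim_eq_card_independent card_Compl_singleton)
  then obtain e where "axis e 1 \<notin> span ((real_vec \<circ> l) ` (- {k}))"
    by (rule exists_axis_notin_span)
  then have e: "det (Z (axis e 1)) \<noteq> 0"
    using m_iff[of "axis e 1"] idot_m by simp
  then have "{x. idot m x = 0} \<subseteq> L"
    using subtorus_lattice_mem_if_det_replace_row_eq_0[OF L l(1)] idot_m by (auto simp: Z_def)
  moreover have "L \<subseteq> {x. idot m x = 0}"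
    using m_iff l(4) by blast
  moreover have "m \<noteq> 0"
    using e idot_m by (auto simp: idot_def)
  ultimately show ?thesis using that by blast
qed

section \<open>Polytopes and integral bases\<close>

lemma polytope_face_has_vertex:
  fixes P :: "'a::euclidean_space set"
  assumes "polytope P" "G face_of P" "G \<noteq> {}"
  obtains v where "v \<in> G" "v extreme_point_of P"
proof -
  have "compact G" "convex G"
    using assms face_of_imp_compact face_of_imp_convex polytope_imp_compact polytope_imp_convex
    by blast+
  then obtain v where v: "v extreme_point_of G"
    using extreme_point_exists_convex assms(3) by blast
  then have "{v} face_of P" using face_of_trans assms(2) face_of_singleton by blast
  then have "v extreme_point_of P" by (simp add: face_of_singleton)
  moreover have "v \<in> G" using v by (simp add: extreme_point_of_def)
  ultimately show ?thesis using that by blast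
qed

lemma polytope_vertex_separating_facet:
  fixes P :: "'a::euclidean_space set"
  assumes "polytope P" "v extreme_point_of P" "w \<in> P" "w \<noteq> v"
  obtains F where "F facet_of P" "v \<in> F" "w \<notin> F"
proof -
  have "{v} = \<Inter>{F. F facet_of P \<and> {v} \<subseteq> F}"
    using face_of_polyhedron[OF polytope_imp_polyhedron[OF assms(1)], of "{v}"] assms
      face_of_singleton
    by blast
  then show ?thesis using that assms(4) by blast
qed

lemma polytope_finite_facets_at: "polytope P \<Longrightarrow> finite (facets_at P v)"
  by (rule finite_subset[OF _ finite_polytope_facets]) (auto simp: facets_at_def)

lemma ex_subset_card_between_iff:
  assumes "finite A" "N \<subseteq> A" "j \<le> card A"
  shows "(\<exists>S. N \<subseteq> S \<and> S \<subseteq> A \<and> card S = j) \<longleftrightarrow> card N \<le> j"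
proof
  assume "\<exists>S. N \<subseteq> S \<and> S \<subseteq> A \<and> card S = j"
  then show "card N \<le> j" using assms(1) by (metis card_mono finite_subset)
next
  assume "card N \<le> j"
  moreover have "card (A - N) = card A - card N"
    using assms by (simp add: card_Diff_subset finite_subset)
  ultimately obtain T where T: "T \<subseteq> A - N" "card T = j - card N"
    using assms(3) obtain_subset_with_card_n[of "j - card N" "A - N"] by (metis diff_le_mono)
  then have "card (N \<union> T) = j"
    using assms \<open>card N \<le> j\<close> by (subst card_Un_disjoint) (auto intro: finite_subset)
  then show "\<exists>S. N \<subseteq> S \<and> S \<subseteq> A \<and> card S = j" using T assms(2) by blast
qed

lemma int_basis_expansion:
  assumes "int_basis A lam"
  obtains c where "x = (\<Sum>F\<in>A. c F *s lam F)"
  using assms unfolding int_basis_def by (metis ex1_implies_ex)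

lemma int_basis_idot_eqI:
  assumes "int_basis A lam" and "\<And>G. G \<in> A \<Longrightarrow> idot a (lam G) = idot b (lam G)"
  shows "a = b"
proof -
  have "idot a x = idot b x" for x
  proof -
    obtain c where "x = (\<Sum>F\<in>A. c F *s lam F)" using int_basis_expansion[OF assms(1)] .
    then show ?thesis using assms(2) by (simp add: idot_lincomb)
  qed
  then show ?thesis by (metis idot_axis vec_eq_iff)
qed

lemma int_basis_dual_exists:
  assumes ib: "int_basis A lam" and fin: "finite A"
  obtains a where "\<And>G. G \<in> A \<Longrightarrow> idot a (lam G) = (if G = F then 1 else 0)"
proof -
  have coords_unique: "c = c'"
    if "\<forall>F. F \<notin> A \<longrightarrow> c F = 0" "\<forall>F. F \<notin> A \<longrightarrow> c' F = 0"
      "(\<Sum>F\<in>A. c F *s lam F) = (\<Sum>F\<in>A. c' F *s lam F)" for c c'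
    using ib[unfolded int_basis_def, rule_format, of "\<Sum>F\<in>A. c F *s lam F"] that by (elim ex1E) blast
  obtain crd where crd: "\<forall>F. F \<notin> A \<longrightarrow> crd x F = 0" "x = (\<Sum>F\<in>A. crd x F *s lam F)" for x
    using ib unfolding int_basis_def by metis
  define a where "a = (\<chi> i. crd (axis i 1) F)"
  show ?thesis
  proof (rule that)
    fix G assume G: "G \<in> A"
    define c where "c F' = (\<Sum>i\<in>UNIV. lam G $ i * crd (axis i 1) F')" for F'
    have "(\<Sum>F'\<in>A. c F' *s lam F') = (\<Sum>i\<in>UNIV. lam G $ i *s (\<Sum>F'\<in>A. crd (axis i 1) F' *s lam F'))"
      unfolding c_def by (rule sum_smult_swap)
    also have "\<dots> = lam G"
      by (simp add: crd(2)[symmetric] basis_expansion)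
    also have "\<dots> = (\<Sum>F'\<in>A. (if F' = G then 1 else 0) *s lam F')"
      using G fin by (simp add: if_distrib[of "\<lambda>k. k *s _"] vector_smult_lzero cong: if_cong)
    finally have "c = (\<lambda>F'. if F' = G then 1 else 0)"
      using G crd(1) by (intro coords_unique) (auto simp: c_def)
    moreover have "idot a (lam G) = c F"
      by (simp add: a_def c_def idot_def mult.commute)
    ultimately show "idot a (lam G) = (if G = F then 1 else 0)" by auto
  qed
qed

section \<open>Weights of a quasitoric pair\<close>

locale quasitoric =
  fixes P :: "(real^'n) set" and lam :: "(real^'n) set \<Rightarrow> int^'n"
  assumes quasitoric_pair: "quasitoric_pair P lam"
begin

lemma polytope: "polytope P"
  using quasitoric_pair by (simp add: quasitoric_pair_def simple_polytope_def)

lemma card_facets_at: "v extreme_point_of P \<Longrightarrow> card (facets_at P v) = CARD('n)"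
  using quasitoric_pair by (simp add: quasitoric_pair_def simple_polytope_def)

lemma finite_facets_at: "finite (facets_at P v)"
  using polytope by (rule polytope_finite_facets_at)

lemma int_basis_facets_at: "v extreme_point_of P \<Longrightarrow> int_basis (facets_at P v) lam"
  using quasitoric_pair by (simp add: quasitoric_pair_def)

lemma vertex_exists: obtains v where "v extreme_point_of P"
proof -
  have "P \<noteq> {}"
    using quasitoric_pair by (auto simp: quasitoric_pair_def simple_polytope_def)
  then show ?thesis
    using that extreme_point_exists_convex polytope_imp_compact[OF polytope]
      polytope_imp_convex[OF polytope]
    by blast
qed

lemma weight_dual:
  assumes "v extreme_point_of P" "F \<in> facets_at P v" "G \<in> facets_at P v"
  shows "idot (weight P lam v F) (lam G) = (if G = F then 1 else 0)"
proof -
  have "\<exists>!a. \<forall>G\<in>facets_at P v. idot a (lam G) = (if G = F then 1 else 0)"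
  proof (rule ex_ex1I)
    show "\<exists>a. \<forall>G\<in>facets_at P v. idot a (lam G) = (if G = F then 1 else 0)"
      using int_basis_dual_exists[OF int_basis_facets_at[OF assms(1)] finite_facets_at] by metis
  next
    fix a b
    assume "\<forall>G\<in>facets_at P v. idot a (lam G) = (if G = F then 1 else 0)"
      and "\<forall>G\<in>facets_at P v. idot b (lam G) = (if G = F then 1 else 0)"
    then show "a = b" by (intro int_basis_idot_eqI[OF int_basis_facets_at[OF assms(1)]]) simp
  qed
  then show ?thesis
    unfolding weight_def using assms(3) by (rule theI'[THEN bspec])
qed

lemma weight_expansion:
  assumes "v extreme_point_of P"
  shows "x = (\<Sum>F\<in>facets_at P v. idot (weight P lam v F) x *s lam F)"
proof -
  obtain c where c: "x = (\<Sum>F\<in>facets_at P v. c F *s lam F)"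
    using int_basis_expansion[OF int_basis_facets_at[OF assms]] .
  have "idot (weight P lam v F) x = c F" if "F \<in> facets_at P v" for F
    using that finite_facets_at
    by (simp add: c idot_lincomb weight_dual[OF assms] if_distrib[of "(*) _"] cong: if_cong)
  then show ?thesis by (subst c) (auto intro: sum.cong)
qed

lemma idot_eq_sum_weights:
  assumes "v extreme_point_of P"
  shows "idot a x = (\<Sum>F\<in>facets_at P v. idot (weight P lam v F) x * idot a (lam F))"
  by (subst weight_expansion[OF assms, of x]) (simp add: idot_lincomb)

lemma stab_lattice_vertex:
  assumes "v extreme_point_of P"
  shows "stab_lattice P lam {v} = UNIV"
proof -
  have facets: "{F. F facet_of P \<and> {v} \<subseteq> F} = facets_at P v" by (auto simp: facets_at_def)
  have "x \<in> stab_lattice P lam {v}" for x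
    unfolding stab_lattice_def facets by (rule CollectI, rule exI, rule weight_expansion[OF assms])
  then show ?thesis by blast
qed

lemma idot_weight_stab_lattice:
  assumes "v extreme_point_of P" "v \<in> G" "F0 \<in> facets_at P v" "\<not> G \<subseteq> F0"
    and "x \<in> stab_lattice P lam G"
  shows "idot (weight P lam v F0) x = 0"
proof -
  obtain c where x: "x = (\<Sum>F\<in>{F. F facet_of P \<and> G \<subseteq> F}. c F *s lam F)"
    using assms(5) by (auto simp: stab_lattice_def)
  have "idot (weight P lam v F0) (lam F) = 0" if "F facet_of P" "G \<subseteq> F" for F
  proof -
    have "F \<in> facets_at P v" "F \<noteq> F0"
      using that assms(2,4) by (auto simp: facets_at_def)
    then show ?thesis using weight_dual[OF assms(1,3)] by simp
  qed
  then show ?thesis by (simp add: x idot_lincomb)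
qed

end

locale quasitoric_subtorus = quasitoric P lam
  for P :: "(real^'n) set" and lam :: "(real^'n) set \<Rightarrow> int^'n" +
  fixes L :: "(int^'n) set" and m :: "int^'n"
  assumes normal_nonzero: "m \<noteq> 0" and L_eq_kernel: "L = {x. idot m x = 0}"
begin

lemma special_facet_iff:
  "F \<in> facets_at P v \<Longrightarrow> F \<in> special_facets P lam L \<longleftrightarrow> idot m (lam F) = 0"
  by (auto simp: special_facets_def facets_at_def L_eq_kernel)

lemma exchange_mem_L: "idot m (lam F1) *s lam F - idot m (lam F) *s lam F1 \<in> L"
  by (simp add: L_eq_kernel idot_diff idot_smult)

lemma idot_weight_exchange:
  assumes "v extreme_point_of P" "F \<in> facets_at P v" "F1 \<in> facets_at P v" "F' \<in> facets_at P v"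
  shows "idot (weight P lam v F') (idot m (lam F1) *s lam F - idot m (lam F) *s lam F1) =
    (if F' = F then idot m (lam F1) else 0) - (if F' = F1 then idot m (lam F) else 0)"
  using weight_dual[OF assms(1,4) assms(2)] weight_dual[OF assms(1,4) assms(3)]
  by (simp add: idot_diff idot_smult)

lemma not_restricted_weights_indepI:
  assumes v: "v extreme_point_of P" and S: "S \<subseteq> facets_at P v"
    and N: "facets_at P v - special_facets P lam L \<subseteq> S"
  shows "\<not> restricted_weights_indep P lam L v S"
proof
  assume indep: "restricted_weights_indep P lam L v S"
  have "(\<Sum>F\<in>S. of_int (idot m (lam F)) * of_int (idot (weight P lam v F) x)) = (0::rat)"
    if "x \<in> L" for x
  proof -
    have "(\<Sum>F\<in>S. idot (weight P lam v F) x * idot m (lam F)) =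
        (\<Sum>F\<in>facets_at P v. idot (weight P lam v F) x * idot m (lam F))"
      using N by (intro sum.mono_neutral_left[OF finite_facets_at S]) (auto simp: special_facet_iff)
    also have "\<dots> = 0"
      using that by (simp add: L_eq_kernel flip: idot_eq_sum_weights[OF v])
    finally show ?thesis by (simp add: mult.commute flip: of_int_mult of_int_sum)
  qed
  then have "\<forall>F\<in>S. idot m (lam F) = 0"
    using indep unfolding restricted_weights_indep_def by fastforce
  then have "idot m (lam F) = idot 0 (lam F)" if "F \<in> facets_at P v" for F
    using that N by (auto simp: special_facet_iff idot_def)
  then have "m = 0" by (rule int_basis_idot_eqI[OF int_basis_facets_at[OF v]])
  with normal_nonzero show False by contradiction
qed

lemma restricted_weights_indepI:
  assumes v: "v extreme_point_of P" and S: "S \<subseteq> facets_at P v"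
    and F1: "F1 \<in> facets_at P v" "F1 \<notin> special_facets P lam L" "F1 \<notin> S"
  shows "restricted_weights_indep P lam L v S"
  unfolding restricted_weights_indep_def
proof (intro allI impI ballI)
  fix c :: "(real^'n) set \<Rightarrow> rat" and F
  assume c: "\<forall>x\<in>L. (\<Sum>F\<in>S. c F * of_int (idot (weight P lam v F) x)) = 0" and F: "F \<in> S"
  let ?y = "idot m (lam F1) *s lam F - idot m (lam F) *s lam F1"
  \<comment> \<open>\<open>?y \<in> L\<close>, and since \<open>F1 \<notin> S\<close>, among the weights of \<open>S\<close> only that of \<open>F\<close> is nonzero on \<open>?y\<close>\<close>
  have "c F' * of_int (idot (weight P lam v F') ?y) =
      (if F' = F then c F * of_int (idot m (lam F1)) else 0)" if "F' \<in> S" for F'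
  proof -
    have "F' \<in> facets_at P v" "F \<in> facets_at P v" "F' \<noteq> F1" using that F S F1(3) by auto
    then show ?thesis using idot_weight_exchange[OF v _ F1(1)] by simp
  qed
  then have "(\<Sum>F'\<in>S. c F' * of_int (idot (weight P lam v F') ?y)) = c F * of_int (idot m (lam F1))"
    using F finite_subset[OF S finite_facets_at] by simp
  moreover have "(\<Sum>F'\<in>S. c F' * of_int (idot (weight P lam v F') ?y)) = 0"
    using c exchange_mem_L by blast
  ultimately have "c F * of_int (idot m (lam F1)) = 0" by simp
  moreover have "idot m (lam F1) \<noteq> 0" using F1(1,2) by (simp add: special_facet_iff)
  ultimately show "c F = 0" by simp
qed

lemma restricted_weights_indep_iff:
  assumes "v extreme_point_of P" "S \<subseteq> facets_at P v"
  shows "restricted_weights_indep P lam L v S \<longleftrightarrow> \<not> facets_at P v - special_facets P lam L \<subseteq> S"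
  using not_restricted_weights_indepI[OF assms] restricted_weights_indepI[OF assms] by blast

lemma all_restricted_weights_indep_iff:
  assumes v: "v extreme_point_of P" and "1 \<le> j" "j \<le> CARD('n) - 1"
  shows "(\<forall>S. S \<subseteq> facets_at P v \<and> card S = j \<longrightarrow> restricted_weights_indep P lam L v S)
    \<longleftrightarrow> card (facets_at P v \<inter> special_facets P lam L) \<le> CARD('n) - 1 - j"
proof -
  let ?N = "facets_at P v - special_facets P lam L"
  have "card ?N = CARD('n) - card (facets_at P v \<inter> special_facets P lam L)"
    using card_facets_at[OF v] finite_facets_at by (simp add: Diff_Int2 card_Diff_subset_Int)
  have "(\<forall>S. S \<subseteq> facets_at P v \<and> card S = j \<longrightarrow> restricted_weights_indep P lam L v S)
      \<longleftrightarrow> \<not> (\<exists>S. ?N \<subseteq> S \<and> S \<subseteq> facets_at P v \<and> card S = j)"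
    using restricted_weights_indep_iff[OF v] by blast
  also have "\<dots> \<longleftrightarrow> \<not> card ?N \<le> j"
    using assms(3) card_facets_at[OF v] finite_facets_at by (subst ex_subset_card_between_iff) auto
  also have "\<dots> \<longleftrightarrow> card (facets_at P v \<inter> special_facets P lam L) \<le> CARD('n) - 1 - j"
    using \<open>card ?N = _\<close> assms(2,3) by arith
  finally show ?thesis .
qed

lemma card_special_facets_at_if_fixed_face:
  assumes G: "G \<in> fixed_faces P lam L" and v: "v extreme_point_of P" "v \<in> G" and "G \<noteq> {v}"
  shows "CARD('n) - 1 \<le> card (facets_at P v \<inter> special_facets P lam L)"
proof -
  obtain w where w: "w \<in> G" "w \<noteq> v" using v(2) \<open>G \<noteq> {v}\<close> by blast
  have "w \<in> P" using G w(1) face_of_imp_subset by (auto simp: fixed_faces_def)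
  then obtain F0 where "F0 facet_of P" "v \<in> F0" "w \<notin> F0"
    using polytope_vertex_separating_facet[OF polytope v(1) _ w(2)] by blast
  then have F0: "F0 \<in> facets_at P v" "\<not> G \<subseteq> F0" using w(1) by (auto simp: facets_at_def)
  have "F \<in> special_facets P lam L" if F: "F \<in> facets_at P v" "F \<noteq> F0" for F
  proof -
    let ?y = "idot m (lam F0) *s lam F - idot m (lam F) *s lam F0"
    have "?y \<in> stab_lattice P lam G"
      using G exchange_mem_L by (auto simp: fixed_faces_def)
    then have "idot (weight P lam v F0) ?y = 0"
      by (rule idot_weight_stab_lattice[OF v(1,2) F0])
    then have "idot m (lam F) = 0"
      using idot_weight_exchange[OF v(1) F(1) F0(1) F0(1)] F(2) by simp
    then show ?thesis using F(1) by (simp add: special_facet_iff)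
  qed
  then have "facets_at P v - {F0} \<subseteq> facets_at P v \<inter> special_facets P lam L" by blast
  then have "card (facets_at P v - {F0}) \<le> card (facets_at P v \<inter> special_facets P lam L)"
    by (rule card_mono[rotated]) (simp add: finite_facets_at)
  then show ?thesis using F0(1) card_facets_at[OF v(1)] finite_facets_at by simp
qed

lemma fixed_faces_nonempty: "fixed_faces P lam L \<noteq> {}"
proof -
  obtain v where v: "v extreme_point_of P" by (rule vertex_exists)
  then have "{v} \<in> fixed_faces P lam L"
    by (simp add: fixed_faces_def face_of_singleton stab_lattice_vertex)
  then show ?thesis by blast
qed

lemma fixed_face_singleton:
  assumes bound: "\<And>v. v extreme_point_of P \<Longrightarrow>
      card (facets_at P v \<inter> special_facets P lam L) < CARD('n) - 1"
    and G: "G \<in> fixed_faces P lam L"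
  obtains v where "G = {v}"
proof -
  obtain v where v: "v \<in> G" "v extreme_point_of P"
    using G polytope_face_has_vertex[OF polytope] by (auto simp: fixed_faces_def)
  have "G = {v}"
  proof (rule ccontr)
    assume "G \<noteq> {v}"
    then show False
      using card_special_facets_at_if_fixed_face[OF G v(2,1)] bound[OF v(2)] by linarith
  qed
  then show ?thesis by (rule that)
qed

lemma j_general_position_iff:
  assumes "1 \<le> j" "j \<le> CARD('n) - 1"
  shows "j_general_position P lam L j \<longleftrightarrow>
    (\<forall>v. v extreme_point_of P \<longrightarrow> card (facets_at P v \<inter> special_facets P lam L) \<le> CARD('n) - 1 - j)"
proof
  assume "j_general_position P lam L j"
  then show "\<forall>v. v extreme_point_of P \<longrightarrow>
      card (facets_at P v \<inter> special_facets P lam L) \<le> CARD('n) - 1 - j"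
    using all_restricted_weights_indep_iff[OF _ assms] by (simp add: j_general_position_def)
next
  assume bound: "\<forall>v. v extreme_point_of P \<longrightarrow>
      card (facets_at P v \<inter> special_facets P lam L) \<le> CARD('n) - 1 - j"
  then have "card (facets_at P v \<inter> special_facets P lam L) < CARD('n) - 1"
    if "v extreme_point_of P" for v
    using that assms by fastforce
  then have "\<exists>v. G = {v}" if "G \<in> fixed_faces P lam L" for G
    using fixed_face_singleton[OF _ that] by blast
  then show "j_general_position P lam L j"
    using fixed_faces_nonempty all_restricted_weights_indep_iff[OF _ assms] bound
    by (simp add: j_general_position_def)
qed

end

section \<open>The complex of special facets\<close>

lemma Kspec_dim_less_iff:
  assumes "polytope P"
  shows "Kspec_dim P lam L < int d \<longleftrightarrow> (\<forall>\<sigma>\<in>Kspec_simplices P lam L. card \<sigma> \<le> d)"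
proof (cases "Kspec_simplices P lam L = {}")
  case True
  then show ?thesis by (simp add: Kspec_dim_def)
next
  case False
  have "Kspec_simplices P lam L \<subseteq> Pow {F. F facet_of P}"
    by (auto simp: Kspec_simplices_def special_facets_def)
  then have "finite (Kspec_simplices P lam L)"
    using finite_polytope_facets[OF assms] finite_subset by blast
  moreover have "Kspec_dim P lam L < int d \<longleftrightarrow> Max (card ` Kspec_simplices P lam L) \<le> d"
    using False by (auto simp: Kspec_dim_def)
  ultimately show ?thesis using False by (simp add: Max_le_iff)
qed

lemma Kspec_simplices_card_le_iff:
  assumes "polytope P"
  shows "(\<forall>\<sigma>\<in>Kspec_simplices P lam L. card \<sigma> \<le> d) \<longleftrightarrow>
    (\<forall>v. v extreme_point_of P \<longrightarrow> card (facets_at P v \<inter> special_facets P lam L) \<le> d)"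
proof safe
  fix v assume bound: "\<forall>\<sigma>\<in>Kspec_simplices P lam L. card \<sigma> \<le> d" and v: "v extreme_point_of P"
  show "card (facets_at P v \<inter> special_facets P lam L) \<le> d"
  proof (cases "facets_at P v \<inter> special_facets P lam L = {}")
    case False
    then have "facets_at P v \<inter> special_facets P lam L \<in> Kspec_simplices P lam L"
      by (auto simp: Kspec_simplices_def facets_at_def)
    then show ?thesis using bound by blast
  qed simp
next
  fix \<sigma> assume bound: "\<forall>v. v extreme_point_of P \<longrightarrow> card (facets_at P v \<inter> special_facets P lam L) \<le> d"
    and \<sigma>: "\<sigma> \<in> Kspec_simplices P lam L"
  then have "\<Inter>\<sigma> face_of P" "\<Inter>\<sigma> \<noteq> {}"
    by (auto simp: Kspec_simplices_def special_facets_def facet_of_def intro!: face_of_Inter)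
  then obtain v where v: "v \<in> \<Inter>\<sigma>" "v extreme_point_of P"
    using polytope_face_has_vertex[OF assms] by blast
  then have "\<sigma> \<subseteq> facets_at P v \<inter> special_facets P lam L"
    using \<sigma> by (auto simp: Kspec_simplices_def special_facets_def facets_at_def)
  then have "card \<sigma> \<le> card (facets_at P v \<inter> special_facets P lam L)"
    using polytope_finite_facets_at[OF assms] by (simp add: card_mono)
  then show "card \<sigma> \<le> d" using bound v(2) by (meson order_trans)
qed

theorem lemma4p6:
  fixes P :: "(real^'n) set" and lam :: "(real^'n) set \<Rightarrow> int^'n"
    and L :: "(int^'n) set" and j :: nat
  assumes "quasitoric_pair P lam"
    and "subtorus_lattice L"
    and "1 \<le> j" and "j \<le> CARD('n) - 1"
  shows "j_general_position P lam L j \<longleftrightarrow> Kspec_dim P lam L \<le> int CARD('n) - 2 - int j"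
proof -
  obtain m where "m \<noteq> 0" "L = {x. idot m x = 0}"
    using subtorus_lattice_eq_kernel[OF assms(2)] .
  with assms(1) interpret quasitoric_subtorus P lam L m
    by unfold_locales
  have "j_general_position P lam L j \<longleftrightarrow>
      (\<forall>v. v extreme_point_of P \<longrightarrow> card (facets_at P v \<inter> special_facets P lam L) \<le> CARD('n) - 1 - j)"
    using assms(3,4) by (rule j_general_position_iff)
  also have "\<dots> \<longleftrightarrow> Kspec_dim P lam L < int (CARD('n) - 1 - j)"
    by (simp add: Kspec_dim_less_iff[OF polytope] Kspec_simplices_card_le_iff[OF polytope])
  also have "\<dots> \<longleftrightarrow> Kspec_dim P lam L \<le> int CARD('n) - 2 - int j"
    using assms(3,4) by linarith
  finally show ?thesis .
qed

end
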